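(* Let $r>0$, $\zeta_k>0$, $H>0$, $P_{\text{peak}}>0$, $\gamma_0>0$, $\theta_k\in\mathbb{R}$ and $\theta_l\in\mathbb{R}$ be fixed. For $\theta\in\mathbb{R}$ let $$S_{k,\max}(\theta)=\frac{P_{\text{peak}}\gamma_0}{r^2+\zeta_k^2+H^2-2r\zeta_k\cos(\theta-\theta_k)}.$$ Define $\hat b_k=\theta_l-\sin(\theta_l-\theta_k)$, $\hat A_k=r^2+\zeta_k^2+H^2-r\zeta_k\big(2\cos(\theta_l-\theta_k)+\sin^2(\theta_l-\theta_k)\big)$, $$\hat B_k=2r\zeta_k\left(\frac{1}{\hat A_k^2}-\frac{1}{(r\zeta_k\sin^2(\theta_l-\theta_k)+\hat A_k)^2}\right),$$ $$\hat C_k=\frac{1}{r\zeta_k\sin^2(\theta_l-\theta_k)+\hat A_k}+\frac{2r\zeta_k\sin^2(\theta_l-\theta_k)}{(r\zeta_k\sin^2(\theta_l-\theta_k)+\hat A_k)^2}-\frac{r\zeta_k\sin^2(\theta_l-\theta_k)}{\hat A_k^2},$$ and $$S^{\text{lb2}}_{k,\max}(\theta)=P_{\text{peak}}\gamma_0\left(-\frac{r\zeta_k(\theta-\hat b_k)^2}{\hat A_k^2}+\hat B_k\sin(\theta_l-\theta_k)(\theta-\hat b_k)+\hat C_k\right).$$ Then $\hat A_k>0$ and for all $\theta\in\mathbb{R}$, $$S^{\text{lb2}}_{k,\max}(\theta)\le\frac{P_{\text{peak}}\gamma_0}{r\zeta_k(\theta-\hat b_k)^2+\hat A_k}\le S_{k,\max}(\theta),$$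 with equality throughout at $\theta=\theta_l$; moreover $S^{\text{lb2}}_{k,\max}$ is concave in $\theta$. *)

theory Defs
  imports "HOL-Analysis.Analysis"
begin

definition S_max :: "real \<Rightarrow> real \<Rightarrow> real \<Rightarrow> real \<Rightarrow> real \<Rightarrow> real \<Rightarrow> real \<Rightarrow> real" where
  "S_max r \<zeta> H P \<gamma>0 \<theta>k \<theta> = P * \<gamma>0 / (r\<^sup>2 + \<zeta>\<^sup>2 + H\<^sup>2 - 2 * r * \<zeta> * cos (\<theta> - \<theta>k))"

definition b_hat :: "real \<Rightarrow> real \<Rightarrow> real" where
  "b_hat \<theta>k \<theta>l = \<theta>l - sin (\<theta>l - \<theta>k)"

definition A_hat :: "real \<Rightarrow> real \<Rightarrow> real \<Rightarrow> real \<Rightarrow> real \<Rightarrow> real" where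
  "A_hat r \<zeta> H \<theta>k \<theta>l = r\<^sup>2 + \<zeta>\<^sup>2 + H\<^sup>2 - r * \<zeta> * (2 * cos (\<theta>l - \<theta>k) + (sin (\<theta>l - \<theta>k))\<^sup>2)"

definition B_hat :: "real \<Rightarrow> real \<Rightarrow> real \<Rightarrow> real \<Rightarrow> real \<Rightarrow> real" where
  "B_hat r \<zeta> H \<theta>k \<theta>l = 2 * r * \<zeta> * (1 / (A_hat r \<zeta> H \<theta>k \<theta>l)\<^sup>2
     - 1 / (r * \<zeta> * (sin (\<theta>l - \<theta>k))\<^sup>2 + A_hat r \<zeta> H \<theta>k \<theta>l)\<^sup>2)"

definition C_hat :: "real \<Rightarrow> real \<Rightarrow> real \<Rightarrow> real \<Rightarrow> real \<Rightarrow> real" where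
  "C_hat r \<zeta> H \<theta>k \<theta>l =
     1 / (r * \<zeta> * (sin (\<theta>l - \<theta>k))\<^sup>2 + A_hat r \<zeta> H \<theta>k \<theta>l)
     + 2 * r * \<zeta> * (sin (\<theta>l - \<theta>k))\<^sup>2 / (r * \<zeta> * (sin (\<theta>l - \<theta>k))\<^sup>2 + A_hat r \<zeta> H \<theta>k \<theta>l)\<^sup>2
     - r * \<zeta> * (sin (\<theta>l - \<theta>k))\<^sup>2 / (A_hat r \<zeta> H \<theta>k \<theta>l)\<^sup>2"

definition S_lb2 :: "real \<Rightarrow> real \<Rightarrow> real \<Rightarrow> real \<Rightarrow> real \<Rightarrow> real \<Rightarrow> real \<Rightarrow> real \<Rightarrow> real" where
  "S_lb2 r \<zeta> H P \<gamma>0 \<theta>k \<theta>l \<theta> = P * \<gamma>0 *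
     (- r * \<zeta> * (\<theta> - b_hat \<theta>k \<theta>l)\<^sup>2 / (A_hat r \<zeta> H \<theta>k \<theta>l)\<^sup>2
      + B_hat r \<zeta> H \<theta>k \<theta>l * sin (\<theta>l - \<theta>k) * (\<theta> - b_hat \<theta>k \<theta>l)
      + C_hat r \<zeta> H \<theta>k \<theta>l)"

definition S_mid :: "real \<Rightarrow> real \<Rightarrow> real \<Rightarrow> real \<Rightarrow> real \<Rightarrow> real \<Rightarrow> real \<Rightarrow> real \<Rightarrow> real" where
  "S_mid r \<zeta> H P \<gamma>0 \<theta>k \<theta>l \<theta> =
     P * \<gamma>0 / (r * \<zeta> * (\<theta> - b_hat \<theta>k \<theta>l)\<^sup>2 + A_hat r \<zeta> H \<theta>k \<theta>l)"

end

(*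
  The upper bound is a comparison of denominators.  With \<open>d = \<theta>l - \<theta>k\<close> and \<open>y = \<theta> - \<theta>l\<close>, the
  function \<open>t \<mapsto> cos (d + t) + t\<^sup>2/2\<close> is convex (its second derivative is \<open>1 - cos \<ge> 0\<close>), so
  \<open>cos (\<theta> - \<theta>k) \<ge> cos d - y sin d - y\<^sup>2/2\<close>; multiplied by \<open>2 r \<zeta>\<close>, this says exactly that the
  denominator of \<open>S_max\<close> is at most the parabola \<open>r \<zeta> (\<theta> - b)\<^sup>2 + A\<close>, with equality at \<open>\<theta>l\<close>.
  For the lower bound, \<open>1/x\<close> is convex, so its tangent at \<open>E = r \<zeta> sin\<^sup>2 d + A\<close> evaluated at
  \<open>x = r \<zeta> (\<theta> - b)\<^sup>2 + A\<close> is below \<open>1/x\<close>; subtracting the nonnegative term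
  \<open>r \<zeta> (1/A\<^sup>2 - 1/E\<^sup>2) (\<theta> - \<theta>l)\<^sup>2\<close> yields precisely \<open>S_lb2 / (P \<gamma>0)\<close>, a parabola with leading
  coefficient \<open>- r \<zeta> / A\<^sup>2\<close>, hence concave.  Positivity of \<open>A\<close> is the identity
  \<open>A = (r - \<zeta>)\<^sup>2 + H\<^sup>2 + r \<zeta> (1 - cos d)\<^sup>2\<close>.
*)

theory Submission
  imports Defs
begin

lemma diff_sin_mono:
  fixes x y :: real
  assumes "x \<le> y"
  shows "x - sin x \<le> y - sin y"
  by (rule deriv_nonneg_imp_mono[where g' = "\<lambda>t. 1 - cos t"])
     (auto intro!: derivative_eq_intros assms)

lemma cos_add_ge_tangent_parabola:
  fixes d y :: real
  shows "cos d - y * sin d - y\<^sup>2 / 2 \<le> cos (d + y)"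
proof -
  define f where "f t = cos (d + t) + t\<^sup>2 / 2" for t
  have deriv: "(f has_real_derivative t - sin (d + t)) (at t)" for t
    unfolding f_def by (auto intro!: derivative_eq_intros)
  have "convex_on UNIV f"
  proof (rule convex_on_realI)
    show "t - sin (d + t) \<le> t' - sin (d + t')" if "t \<le> t'" for t t'
      using diff_sin_mono[of "d + t" "d + t'"] that by simp
  qed (use deriv in auto)
  then have "f y - f 0 \<ge> (0 - sin (d + 0)) * (y - 0)"
    by (rule convex_on_imp_above_tangent) (use deriv[of 0] in auto)
  then show ?thesis
    unfolding f_def by (simp add: algebra_simps)
qed

lemma inverse_ge_tangent:
  fixes x c :: real
  assumes "0 < x" "0 < c"
  shows "1 / c - (x - c) / c\<^sup>2 \<le> 1 / x"
proof -
  have "1 / x - (1 / c - (x - c) / c\<^sup>2) = (x - c)\<^sup>2 / (x * c\<^sup>2)"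
    using assms by (simp add: field_simps power2_eq_square)
  also have "\<dots> \<ge> 0"
    using assms by simp
  finally show ?thesis by simp
qed

lemma concave_on_neg_quadratic:
  fixes k c \<beta> \<gamma> :: real
  assumes "0 \<le> k"
  shows "concave_on UNIV (\<lambda>x. - k * (x - c)\<^sup>2 + \<beta> * (x - c) + \<gamma>)"
proof -
  have "convex_on UNIV (\<lambda>x. k * (x - c)\<^sup>2 - \<beta> * (x - c) - \<gamma>)"
  proof (rule convex_on_realI)
    show "((\<lambda>x. k * (x - c)\<^sup>2 - \<beta> * (x - c) - \<gamma>) has_real_derivative 2 * k * (x - c) - \<beta>) (at x)"
      for x
      by (auto intro!: derivative_eq_intros)
    show "2 * k * (x - c) - \<beta> \<le> 2 * k * (y - c) - \<beta>" if "x \<le> y" for x y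
      using assms that by (simp add: mult_left_mono)
  qed auto
  then show ?thesis
    by (simp add: concave_on_def algebra_simps)
qed

definition inverse_parabola_minorant :: "real \<Rightarrow> real \<Rightarrow> real \<Rightarrow> real \<Rightarrow> real" where
  "inverse_parabola_minorant a A s u =
     1 / (a * s\<^sup>2 + A) - a * (u\<^sup>2 - s\<^sup>2) / (a * s\<^sup>2 + A)\<^sup>2
     - a * (1 / A\<^sup>2 - 1 / (a * s\<^sup>2 + A)\<^sup>2) * (u - s)\<^sup>2"

lemma inverse_parabola_minorant_le:
  fixes a A s u :: real
  assumes "0 \<le> a" "0 < A"
  shows "inverse_parabola_minorant a A s u \<le> 1 / (a * u\<^sup>2 + A)"
proof -
  define E where "E = a * s\<^sup>2 + A"
  have "A \<le> E" "0 < E" "0 < a * u\<^sup>2 + A"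
    using assms by (simp_all add: E_def add_nonneg_pos)
  then have "1 / E - a * (u\<^sup>2 - s\<^sup>2) / E\<^sup>2 \<le> 1 / (a * u\<^sup>2 + A)"
    using inverse_ge_tangent[of "a * u\<^sup>2 + A" E] by (simp add: E_def right_diff_distrib)
  moreover have "0 \<le> a * (1 / A\<^sup>2 - 1 / E\<^sup>2) * (u - s)\<^sup>2"
    using assms \<open>A \<le> E\<close> by (simp add: frac_le power_mono)
  ultimately show ?thesis
    unfolding inverse_parabola_minorant_def E_def[symmetric] by linarith
qed

lemma inverse_parabola_minorant_touches:
  "inverse_parabola_minorant a A s s = 1 / (a * s\<^sup>2 + A)"
  by (simp add: inverse_parabola_minorant_def)

lemma concave_on_inverse_parabola_minorant:
  fixes a A s b :: real
  assumes "0 \<le> a"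
  shows "concave_on UNIV (\<lambda>\<theta>. inverse_parabola_minorant a A s (\<theta> - b))"
proof -
  define E where "E = a * s\<^sup>2 + A"
  have minorant_eq: "(\<lambda>\<theta>. inverse_parabola_minorant a A s (\<theta> - b))
      = (\<lambda>\<theta>. - (a / A\<^sup>2) * (\<theta> - b)\<^sup>2 + 2 * a * s * (1 / A\<^sup>2 - 1 / E\<^sup>2) * (\<theta> - b)
             + (1 / E + 2 * a * s\<^sup>2 / E\<^sup>2 - a * s\<^sup>2 / A\<^sup>2))"
    unfolding inverse_parabola_minorant_def E_def[symmetric] divide_inverse
    by (simp add: algebra_simps power2_eq_square)
  show ?thesis
    unfolding minorant_eq by (rule concave_on_neg_quadratic) (use assms in simp)
qed

lemma A_hat_eq:
  "A_hat r \<zeta> H \<theta>k \<theta>l = (r - \<zeta>)\<^sup>2 + H\<^sup>2 + r * \<zeta> * (1 - cos (\<theta>l - \<theta>k))\<^sup>2"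
  unfolding A_hat_def sin_squared_eq
  by (simp add: power2_eq_square algebra_simps)

lemma A_hat_pos:
  assumes "0 \<le> r * \<zeta>" "H \<noteq> 0"
  shows "0 < A_hat r \<zeta> H \<theta>k \<theta>l"
proof -
  have "0 \<le> r * \<zeta> * (1 - cos (\<theta>l - \<theta>k))\<^sup>2"
    using assms by simp
  moreover have "0 < H\<^sup>2"
    using assms by simp
  ultimately show ?thesis
    unfolding A_hat_eq by (simp add: add_nonneg_pos add_pos_nonneg)
qed

lemma S_max_denominator_pos:
  fixes r \<zeta> H t :: real
  assumes "0 \<le> r * \<zeta>" "H \<noteq> 0"
  shows "0 < r\<^sup>2 + \<zeta>\<^sup>2 + H\<^sup>2 - 2 * r * \<zeta> * cos t"
proof -
  have "r\<^sup>2 + \<zeta>\<^sup>2 + H\<^sup>2 - 2 * r * \<zeta> * cos t = (r - \<zeta>)\<^sup>2 + H\<^sup>2 + 2 * (r * \<zeta>) * (1 - cos t)"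
    by (simp add: power2_eq_square algebra_simps)
  moreover have "0 \<le> 2 * (r * \<zeta>) * (1 - cos t)" "0 < H\<^sup>2"
    using assms by simp_all
  ultimately show ?thesis
    using zero_le_power2[of "r - \<zeta>"] by linarith
qed

lemma S_max_denominator_le_S_mid_denominator:
  fixes r \<zeta> H \<theta>k \<theta>l \<theta> :: real
  assumes "0 \<le> r * \<zeta>"
  shows "r\<^sup>2 + \<zeta>\<^sup>2 + H\<^sup>2 - 2 * r * \<zeta> * cos (\<theta> - \<theta>k)
    \<le> r * \<zeta> * (\<theta> - b_hat \<theta>k \<theta>l)\<^sup>2 + A_hat r \<zeta> H \<theta>k \<theta>l"
proof -
  define d y where "d = \<theta>l - \<theta>k" and "y = \<theta> - \<theta>l"
  have "cos d - y * sin d - y\<^sup>2 / 2 \<le> cos (\<theta> - \<theta>k)"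
    using cos_add_ge_tangent_parabola[of d y] by (simp add: d_def y_def)
  then have "r * \<zeta> * (2 * cos d - 2 * y * sin d - y\<^sup>2) \<le> r * \<zeta> * (2 * cos (\<theta> - \<theta>k))"
    using assms by (intro mult_left_mono) auto
  moreover have "r * \<zeta> * (\<theta> - b_hat \<theta>k \<theta>l)\<^sup>2 + A_hat r \<zeta> H \<theta>k \<theta>l
      = r\<^sup>2 + \<zeta>\<^sup>2 + H\<^sup>2 - r * \<zeta> * (2 * cos d - 2 * y * sin d - y\<^sup>2)"
    unfolding A_hat_def b_hat_def d_def y_def by (simp add: power2_eq_square algebra_simps)
  ultimately show ?thesis by simp
qed

lemma S_lb2_eq_minorant:
  "S_lb2 r \<zeta> H P \<gamma>0 \<theta>k \<theta>l \<theta> = P * \<gamma>0 *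
     inverse_parabola_minorant (r * \<zeta>) (A_hat r \<zeta> H \<theta>k \<theta>l) (sin (\<theta>l - \<theta>k)) (\<theta> - b_hat \<theta>k \<theta>l)"
  unfolding S_lb2_def B_hat_def C_hat_def inverse_parabola_minorant_def divide_inverse
  by (simp add: power2_eq_square algebra_simps)

lemma S_mid_eq:
  "S_mid r \<zeta> H P \<gamma>0 \<theta>k \<theta>l \<theta> = P * \<gamma>0 * (1 / (r * \<zeta> * (\<theta> - b_hat \<theta>k \<theta>l)\<^sup>2 + A_hat r \<zeta> H \<theta>k \<theta>l))"
  unfolding S_mid_def by simp

lemma S_lb2_le_S_mid:
  assumes "0 \<le> r * \<zeta>" "H \<noteq> 0" "0 \<le> P * \<gamma>0"
  shows "S_lb2 r \<zeta> H P \<gamma>0 \<theta>k \<theta>l \<theta> \<le> S_mid r \<zeta> H P \<gamma>0 \<theta>k \<theta>l \<theta>"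
  unfolding S_lb2_eq_minorant S_mid_eq
  using assms inverse_parabola_minorant_le[OF assms(1) A_hat_pos[OF assms(1,2)]]
  by (intro mult_left_mono) auto

lemma S_mid_le_S_max:
  assumes "0 \<le> r * \<zeta>" "H \<noteq> 0" "0 \<le> P * \<gamma>0"
  shows "S_mid r \<zeta> H P \<gamma>0 \<theta>k \<theta>l \<theta> \<le> S_max r \<zeta> H P \<gamma>0 \<theta>k \<theta>"
proof -
  define X where "X = r\<^sup>2 + \<zeta>\<^sup>2 + H\<^sup>2 - 2 * r * \<zeta> * cos (\<theta> - \<theta>k)"
  define Y where "Y = r * \<zeta> * (\<theta> - b_hat \<theta>k \<theta>l)\<^sup>2 + A_hat r \<zeta> H \<theta>k \<theta>l"
  have "0 < X"
    unfolding X_def using assms(1,2) by (rule S_max_denominator_pos)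
  moreover have "X \<le> Y"
    unfolding X_def Y_def using assms(1) by (rule S_max_denominator_le_S_mid_denominator)
  ultimately have "P * \<gamma>0 / Y \<le> P * \<gamma>0 / X"
    using assms(3) by (intro divide_left_mono) auto
  then show ?thesis
    unfolding S_mid_def S_max_def X_def Y_def .
qed

lemma S_lb2_eq_S_mid_at_\<theta>l:
  "S_lb2 r \<zeta> H P \<gamma>0 \<theta>k \<theta>l \<theta>l = S_mid r \<zeta> H P \<gamma>0 \<theta>k \<theta>l \<theta>l"
  unfolding S_lb2_eq_minorant S_mid_eq
  by (simp add: b_hat_def inverse_parabola_minorant_touches)

lemma S_mid_eq_S_max_at_\<theta>l:
  "S_mid r \<zeta> H P \<gamma>0 \<theta>k \<theta>l \<theta>l = S_max r \<zeta> H P \<gamma>0 \<theta>k \<theta>l"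
  unfolding S_mid_def S_max_def A_hat_def b_hat_def by (simp add: algebra_simps)

lemma concave_on_S_lb2:
  assumes "0 \<le> r * \<zeta>" "0 \<le> P * \<gamma>0"
  shows "concave_on UNIV (S_lb2 r \<zeta> H P \<gamma>0 \<theta>k \<theta>l)"
  unfolding S_lb2_eq_minorant[abs_def]
  using assms by (intro concave_on_cmul concave_on_inverse_parabola_minorant)

theorem mainTheorem5:
  fixes r \<zeta> H P \<gamma>0 \<theta>k \<theta>l :: real
  assumes "r > 0" "\<zeta> > 0" "H > 0" "P > 0" "\<gamma>0 > 0"
  shows "A_hat r \<zeta> H \<theta>k \<theta>l > 0
    \<and> (\<forall>\<theta>. S_lb2 r \<zeta> H P \<gamma>0 \<theta>k \<theta>l \<theta> \<le> S_mid r \<zeta> H P \<gamma>0 \<theta>k \<theta>l \<theta>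
           \<and> S_mid r \<zeta> H P \<gamma>0 \<theta>k \<theta>l \<theta> \<le> S_max r \<zeta> H P \<gamma>0 \<theta>k \<theta>)
    \<and> S_lb2 r \<zeta> H P \<gamma>0 \<theta>k \<theta>l \<theta>l = S_mid r \<zeta> H P \<gamma>0 \<theta>k \<theta>l \<theta>l
    \<and> S_mid r \<zeta> H P \<gamma>0 \<theta>k \<theta>l \<theta>l = S_max r \<zeta> H P \<gamma>0 \<theta>k \<theta>l
    \<and> concave_on UNIV (S_lb2 r \<zeta> H P \<gamma>0 \<theta>k \<theta>l)"
proof -
  have "0 \<le> r * \<zeta>" "H \<noteq> 0" "0 \<le> P * \<gamma>0"
    using assms by auto
  then show ?thesis
    by (simp add: A_hat_pos S_lb2_le_S_mid S_mid_le_S_max concave_on_S_lb2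
        S_lb2_eq_S_mid_at_\<theta>l S_mid_eq_S_max_at_\<theta>l)
qed

end
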